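(* Let $(M,F)$ be a Finsler manifold with finite uniform constant $\Lambda_F$. Then the uniform constant $\Lambda_{F^*}$ of the dual metric $F^*$ equals $\Lambda_F$.
   Context: $g_y$ is the fundamental tensor of $F$ at $y\ne0$; $\Lambda_F=\sup\{g_X(Y,Y)/g_Z(Y,Y):X,Y,Z\in S_xM,\ x\in M\}$, where $S_xM=\{F(x,\cdot)=1\}$. The Legendre transformation is $\mathcal L(y)=g_y(y,\cdot)$; the dual metric is $F^*(\xi)=F(\mathcal L^{-1}\xi)$ on $T^*M$, with fundamental tensor $g^*_\xi=\frac12\,\mathrm{Hess}(F^{*2})(\xi)$, which is the inverse (dual) inner product of $g_{\mathcal L^{-1}(\xi)}$. $\Lambda_{F^*}=\sup\{g^*_\xi(\eta,\eta)/g^*_\zeta(\eta,\eta):\xi,\eta,\zeta\in T^*_xM,\ F^*(\xi)=F^*(\eta)=F^*(\zeta)=1,\ x\in M\}$. *)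

theory Defs
  imports "HOL-Analysis.Analysis"
begin

fun Ck_on :: "nat \<Rightarrow> 'v::euclidean_space set \<Rightarrow> ('v \<Rightarrow> real) \<Rightarrow> bool" where
  "Ck_on 0 S f = continuous_on S f"
| "Ck_on (Suc k) S f =
     (f differentiable_on S \<and> (\<forall>u. Ck_on k S (\<lambda>z. frechet_derivative f (at z) u)))"

definition smooth_on :: "'v::euclidean_space set \<Rightarrow> ('v \<Rightarrow> real) \<Rightarrow> bool" where
  "smooth_on S f \<longleftrightarrow> (\<forall>k. Ck_on k S f)"

definition hess :: "('v::euclidean_space \<Rightarrow> real) \<Rightarrow> 'v \<Rightarrow> 'v \<Rightarrow> 'v \<Rightarrow> real" where
  "hess f y u v = frechet_derivative (\<lambda>z. frechet_derivative f (at z) u) (at y) v"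

definition fund_tensor :: "('v::euclidean_space \<Rightarrow> real) \<Rightarrow> 'v \<Rightarrow> 'v \<Rightarrow> 'v \<Rightarrow> real" where
  "fund_tensor F y u v = (1/2) * hess (\<lambda>z. (F z)^2) y u v"

definition minkowski_norm :: "('v::euclidean_space \<Rightarrow> real) \<Rightarrow> bool" where
  "minkowski_norm F \<longleftrightarrow>
     (\<forall>y. F y \<ge> 0) \<and> continuous_on UNIV F \<and>
     smooth_on (UNIV - {0}) F \<and>
     (\<forall>y. \<forall>c>0. F (c *\<^sub>R y) = c * F y) \<and>
     (\<forall>y. y \<noteq> 0 \<longrightarrow> (\<forall>u. u \<noteq> 0 \<longrightarrow> fund_tensor F y u u > 0))"

text \<open>Covectors are identified with vectors through the inner product: xi corresponds to
  the linear functional (\<lambda>v. xi \<bullet> v).  Legendre transformation L(y) = g_y(y,.), with L(0)=0.\<close>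
definition legendre :: "('v::euclidean_space \<Rightarrow> real) \<Rightarrow> 'v \<Rightarrow> 'v" where
  "legendre F y = (if y = 0 then 0 else (\<Sum>b\<in>Basis. fund_tensor F y y b *\<^sub>R b))"

definition dual_metric :: "('v::euclidean_space \<Rightarrow> real) \<Rightarrow> 'v \<Rightarrow> real" where
  "dual_metric F \<xi> = F (inv (legendre F) \<xi>)"

definition uniform_const :: "'m set \<Rightarrow> ('m \<Rightarrow> 'v::euclidean_space \<Rightarrow> real) \<Rightarrow> ereal" where
  "uniform_const M F = Sup {ereal (fund_tensor (F x) X Y Y / fund_tensor (F x) Z Y Y) | x X Y Z.
      x \<in> M \<and> F x X = 1 \<and> F x Y = 1 \<and> F x Z = 1}"

end

theory Submission
  imports Defs
begin

text \<open>At a point, g is represented by a field of symmetric positive definite operators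
  G(y) with g_y(u,v) = G(y)v \<bullet> u, and by homogeneity the quotients g_X(Y,Y)/g_Z(Y,Y) over
  unit Y have the same supremum as over all Y \<noteq> 0: the largest eigenvalue of G(X) relative
  to G(Z).  The Legendre transformation has derivative G(y), so by the inverse function
  theorem the fundamental tensor of F* at \<xi> is G(L^-1 \<xi>)^-1.  Inversion reverses the Loewner
  order, hence the largest eigenvalue of P relative to Q equals that of Q^-1 relative to
  P^-1; since L maps the unit sphere of F onto that of F*, both uniform constants are the
  supremum of the same numbers.  The argument takes place in the extended reals.\<close>

section \<open>Symmetry of second derivatives\<close>

lemma has_real_derivative_along_line:
  assumes "(f has_derivative f') (at (a + s *\<^sub>R u))"
  shows "((\<lambda>t. f (a + t *\<^sub>R u)) has_real_derivative f' u) (at s)"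
proof -
  have "((\<lambda>t. a + t *\<^sub>R u) has_derivative (\<lambda>t. t *\<^sub>R u)) (at s)"
    by (auto intro!: derivative_eq_intros)
  from has_derivative_compose[OF this assms]
  have "((\<lambda>t. f (a + t *\<^sub>R u)) has_derivative (\<lambda>t. f' (t *\<^sub>R u))) (at s)" .
  moreover have "(\<lambda>t. f' (t *\<^sub>R u)) = (\<lambda>t. f' u * t)"
    using has_derivative_bounded_linear[OF assms]
    by (auto simp: linear_scale[OF bounded_linear.linear] mult.commute)
  ultimately show ?thesis unfolding has_field_derivative_def by simp
qed

lemma DERIV_unique_on_open:
  assumes "(f has_real_derivative D) (at x)" "(g has_real_derivative D') (at x)"
    and "open S" "x \<in> S" "\<And>y. y \<in> S \<Longrightarrow> f y = g y"
  shows "D = D'"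
  using has_field_derivative_transform_within_open[OF assms(1,3,4,5)] assms(2) DERIV_unique
  by blast

lemma second_difference_mean_value:
  fixes f :: "'a::euclidean_space \<Rightarrow> real"
  assumes S: "ball y r \<subseteq> S"
    and d1: "\<And>z. z \<in> S \<Longrightarrow> (f has_derivative df z) (at z)"
    and d2: "\<And>z u. z \<in> S \<Longrightarrow> ((\<lambda>w. df w u) has_derivative d2f z u) (at z)"
    and h: "0 < h" "h * (norm u + norm v) < r"
  shows "\<exists>s t. 0 < s \<and> s < h \<and> 0 < t \<and> t < h \<and>
     f (y + h *\<^sub>R u + h *\<^sub>R v) - f (y + h *\<^sub>R u) - f (y + h *\<^sub>R v) + f y
       = h * h * d2f (y + s *\<^sub>R u + t *\<^sub>R v) u v"
proof -
  have in_S: "y + s *\<^sub>R u + t *\<^sub>R v \<in> S" if "0 \<le> s" "s \<le> h" "0 \<le> t" "t \<le> h" for s t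
  proof -
    have "norm (s *\<^sub>R u + t *\<^sub>R v) \<le> s * norm u + t * norm v"
      using that by (metis abs_of_nonneg norm_scaleR norm_triangle_le order_refl add_mono)
    also have "\<dots> \<le> h * norm u + h * norm v"
      using that by (intro add_mono mult_right_mono) auto
    also have "\<dots> < r" using h by (simp add: algebra_simps)
    finally have "y + (s *\<^sub>R u + t *\<^sub>R v) \<in> ball y r"
      by (metis add_diff_cancel_left' dist_commute dist_norm mem_ball)
    then show ?thesis using S by (auto simp: add.assoc)
  qed
  define p where "p s = f (y + s *\<^sub>R u + h *\<^sub>R v) - f (y + s *\<^sub>R u)" for s
  have "(p has_real_derivative (df (y + s *\<^sub>R u + h *\<^sub>R v) u - df (y + s *\<^sub>R u) u)) (at s)"
    if "0 \<le> s" "s \<le> h" for s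
  proof -
    have "((\<lambda>s. f ((y + h *\<^sub>R v) + s *\<^sub>R u)) has_real_derivative df (y + s *\<^sub>R u + h *\<^sub>R v) u) (at s)"
      by (rule has_real_derivative_along_line)
        (use d1 in_S[of s h] that h in \<open>auto simp: algebra_simps\<close>)
    moreover have "((\<lambda>s. f (y + s *\<^sub>R u)) has_real_derivative df (y + s *\<^sub>R u) u) (at s)"
      by (rule has_real_derivative_along_line)
        (use d1 in_S[of s 0] that h in \<open>auto simp: algebra_simps\<close>)
    ultimately show ?thesis unfolding p_def by (auto intro: DERIV_diff simp: algebra_simps)
  qed
  from MVT2[OF h(1) this] obtain s where s: "0 < s" "s < h"
    "p h - p 0 = h * (df (y + s *\<^sub>R u + h *\<^sub>R v) u - df (y + s *\<^sub>R u) u)" by auto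
  define q where "q t = df (y + s *\<^sub>R u + t *\<^sub>R v) u" for t
  have "(q has_real_derivative d2f (y + s *\<^sub>R u + t *\<^sub>R v) u v) (at t)"
    if "0 \<le> t" "t \<le> h" for t
    unfolding q_def by (rule has_real_derivative_along_line) (use d2 in_S[of s t] that s in auto)
  from MVT2[OF h(1) this] obtain t where t: "0 < t" "t < h"
    "q h - q 0 = h * d2f (y + s *\<^sub>R u + t *\<^sub>R v) u v" by auto
  have "f (y + h *\<^sub>R u + h *\<^sub>R v) - f (y + h *\<^sub>R u) - f (y + h *\<^sub>R v) + f y = p h - p 0"
    by (simp add: p_def)
  also have "\<dots> = h * (q h - q 0)" using s(3) by (simp add: q_def)
  also have "\<dots> = h * h * d2f (y + s *\<^sub>R u + t *\<^sub>R v) u v" using t(3) by simp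
  finally show ?thesis using s t by blast
qed

lemma second_difference_tendsto:
  fixes f :: "'a::euclidean_space \<Rightarrow> real"
  assumes S: "open S" "y \<in> S"
    and d1: "\<And>z. z \<in> S \<Longrightarrow> (f has_derivative df z) (at z)"
    and d2: "\<And>z u. z \<in> S \<Longrightarrow> ((\<lambda>w. df w u) has_derivative d2f z u) (at z)"
    and cont: "isCont (\<lambda>z. d2f z u v) y"
  shows "((\<lambda>h. (f (y + h *\<^sub>R u + h *\<^sub>R v) - f (y + h *\<^sub>R u) - f (y + h *\<^sub>R v) + f y) / h\<^sup>2)
           \<longlongrightarrow> d2f y u v) (at_right 0)"
  unfolding tendsto_iff eventually_at_right_field
proof (intro allI impI)
  fix e :: real assume "e > 0"
  obtain r where r: "r > 0" "ball y r \<subseteq> S" using S openE by blast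
  obtain d where d: "d > 0" "\<And>z. dist z y < d \<Longrightarrow> dist (d2f z u v) (d2f y u v) < e"
    using cont \<open>e > 0\<close> unfolding continuous_at_eps_delta by blast
  define b where "b = min r d / (norm u + norm v + 1)"
  have denom: "norm u + norm v + 1 > 0" by (simp add: add_nonneg_pos)
  have "b > 0" using r d denom by (simp add: b_def)
  moreover have "dist ((f (y + h *\<^sub>R u + h *\<^sub>R v) - f (y + h *\<^sub>R u) - f (y + h *\<^sub>R v) + f y) / h\<^sup>2)
      (d2f y u v) < e" if h: "0 < h" "h < b" for h
  proof -
    have "h * (norm u + norm v) \<le> h * (norm u + norm v + 1)" using h by simp
    also have "\<dots> < b * (norm u + norm v + 1)" using h denom by simp
    also have "\<dots> = min r d" using denom by (simp add: b_def)
    finally have small: "h * (norm u + norm v) < min r d" .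
    then obtain s t where st: "0 < s" "s < h" "0 < t" "t < h"
      and diff: "f (y + h *\<^sub>R u + h *\<^sub>R v) - f (y + h *\<^sub>R u) - f (y + h *\<^sub>R v) + f y
        = h * h * d2f (y + s *\<^sub>R u + t *\<^sub>R v) u v"
      using second_difference_mean_value[OF r(2) d1 d2 h(1), of u v] by auto
    have "dist (y + s *\<^sub>R u + t *\<^sub>R v) y \<le> s * norm u + t * norm v"
      using st by (simp add: dist_norm add.assoc norm_triangle_le)
    also have "\<dots> \<le> h * (norm u + norm v)"
      using st by (simp add: distrib_left add_mono mult_right_mono)
    also have "\<dots> < d" using small by simp
    finally have "dist (d2f (y + s *\<^sub>R u + t *\<^sub>R v) u v) (d2f y u v) < e" by (rule d(2))
    then show ?thesis using diff h by (simp add: power2_eq_square)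
  qed
  ultimately show "\<exists>b>0. \<forall>h>0. h < b \<longrightarrow> dist ((f (y + h *\<^sub>R u + h *\<^sub>R v) - f (y + h *\<^sub>R u)
      - f (y + h *\<^sub>R v) + f y) / h\<^sup>2) (d2f y u v) < e" by blast
qed

lemma second_derivative_symmetric:
  fixes f :: "'a::euclidean_space \<Rightarrow> real"
  assumes S: "open S" "y \<in> S"
    and d1: "\<And>z. z \<in> S \<Longrightarrow> (f has_derivative df z) (at z)"
    and d2: "\<And>z u. z \<in> S \<Longrightarrow> ((\<lambda>w. df w u) has_derivative d2f z u) (at z)"
    and cont: "\<And>u v. isCont (\<lambda>z. d2f z u v) y"
  shows "d2f y u v = d2f y v u"
proof -
  have "(\<lambda>h. (f (y + h *\<^sub>R v + h *\<^sub>R u) - f (y + h *\<^sub>R v) - f (y + h *\<^sub>R u) + f y) / h\<^sup>2)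
      = (\<lambda>h. (f (y + h *\<^sub>R u + h *\<^sub>R v) - f (y + h *\<^sub>R u) - f (y + h *\<^sub>R v) + f y) / h\<^sup>2)"
    by (simp add: algebra_simps)
  then show ?thesis
    using second_difference_tendsto[OF S d1 d2 cont, of u v]
      second_difference_tendsto[OF S d1 d2 cont, of v u]
    by (auto intro: tendsto_unique[OF trivial_limit_at_right_real])
qed


section \<open>Positive definite operators and Rayleigh quotients\<close>

lemma inner_sum_Basis_linear:
  fixes l :: "'v::euclidean_space \<Rightarrow> real"
  assumes "linear l"
  shows "(\<Sum>b\<in>Basis. l b *\<^sub>R b) \<bullet> v = l v"
proof -
  have "l v = l (\<Sum>b\<in>Basis. (v \<bullet> b) *\<^sub>R b)" by (simp add: euclidean_representation)
  also have "\<dots> = (\<Sum>b\<in>Basis. (v \<bullet> b) * l b)"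
    using assms by (simp add: linear_sum linear_scale)
  also have "\<dots> = (\<Sum>b\<in>Basis. l b * (b \<bullet> v))"
    by (rule sum.cong) (auto simp: inner_commute)
  also have "\<dots> = (\<Sum>b\<in>Basis. l b *\<^sub>R b) \<bullet> v"
    by (simp add: inner_sum_left)
  finally show ?thesis ..
qed

definition posdef_op :: "('v::euclidean_space \<Rightarrow> 'v) \<Rightarrow> bool" where
  "posdef_op P \<longleftrightarrow> linear P \<and> (\<forall>u v. P u \<bullet> v = u \<bullet> P v) \<and> (\<forall>v. v \<noteq> 0 \<longrightarrow> P v \<bullet> v > 0)"

lemma posdef_op_nonneg: "posdef_op P \<Longrightarrow> P v \<bullet> v \<ge> 0"
  unfolding posdef_op_def by (cases "v = 0") (auto simp: less_imp_le)

lemma bij_posdef_op: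
  assumes "posdef_op P"
  shows "bij P"
proof -
  have lin: "linear P" using assms by (simp add: posdef_op_def)
  have "inj P" unfolding linear_injective_0[OF lin]
    using assms unfolding posdef_op_def by (metis inner_zero_left less_irrefl)
  then show ?thesis
    using eucl.linear_injective_imp_surjective[OF lin] by (simp add: bij_def)
qed

lemma posdef_op_inv:
  assumes "posdef_op P"
  shows "posdef_op (inv P)"
proof -
  have lin: "linear P" and sym: "\<And>u v. P u \<bullet> v = u \<bullet> P v"
    and pos: "\<And>v. v \<noteq> 0 \<Longrightarrow> P v \<bullet> v > 0" using assms by (auto simp: posdef_op_def)
  have b: "bij P" by (rule bij_posdef_op[OF assms])
  then have P_inv: "P (inv P w) = w" for w by (simp add: bij_def surj_f_inv_f)
  have "linear (inv P)" using eucl.inj_linear_imp_inv_linear[OF lin] b by (simp add: bij_def)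
  moreover have "inv P u \<bullet> v = u \<bullet> inv P v" for u v
    using sym[of "inv P u" "inv P v"] by (simp add: P_inv)
  moreover have "inv P v \<bullet> v > 0" if "v \<noteq> 0" for v
  proof -
    have "inv P v \<noteq> 0" using that P_inv[of v] lin by (metis linear_0)
    from pos[OF this] show ?thesis by (simp add: P_inv inner_commute)
  qed
  ultimately show ?thesis by (simp add: posdef_op_def)
qed

lemma posdef_op_Cauchy_Schwarz:
  assumes "posdef_op P"
  shows "(P a \<bullet> x)\<^sup>2 \<le> (P a \<bullet> a) * (P x \<bullet> x)"
proof (cases "x = 0")
  case True then show ?thesis by simp
next
  case False
  have lin: "linear P" and sym: "\<And>u v. P u \<bullet> v = u \<bullet> P v"
    and pos: "\<And>v. v \<noteq> 0 \<Longrightarrow> P v \<bullet> v > 0" using assms by (auto simp: posdef_op_def)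
  define B where "B = P x \<bullet> x"
  have B: "B > 0" using pos[OF False] by (simp add: B_def)
  define t where "t = (P a \<bullet> x) / B"
  have "0 \<le> P (a - t *\<^sub>R x) \<bullet> (a - t *\<^sub>R x)" by (rule posdef_op_nonneg[OF assms])
  also have "\<dots> = P a \<bullet> a - 2 * t * (P a \<bullet> x) + t * t * B"
    using sym[of x a]
    by (simp add: linear_diff[OF lin] linear_scale[OF lin] inner_diff_left inner_diff_right
        B_def algebra_simps inner_commute)
  also have "\<dots> = P a \<bullet> a - (P a \<bullet> x)\<^sup>2 / B"
    using B by (simp add: t_def field_simps power2_eq_square)
  finally show ?thesis using B by (simp add: B_def divide_le_eq mult.commute)
qed

lemma posdef_op_inv_antimono:
  assumes P: "posdef_op P" and Q: "posdef_op Q" and "c \<ge> 0"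
    and le: "\<And>v. P v \<bullet> v \<le> c * (Q v \<bullet> v)"
  shows "inv Q w \<bullet> w \<le> c * (inv P w \<bullet> w)"
proof -
  define a where "a = inv P w"
  define x where "x = inv Q w"
  have Pa: "P a = w" using bij_posdef_op[OF P] by (simp add: a_def bij_def surj_f_inv_f)
  have Qx: "Q x = w" using bij_posdef_op[OF Q] by (simp add: x_def bij_def surj_f_inv_f)
  have s0: "w \<bullet> x \<ge> 0" using posdef_op_nonneg[OF Q, of x] by (simp add: Qx)
  have A0: "w \<bullet> a \<ge> 0" using posdef_op_nonneg[OF P, of a] by (simp add: Pa)
  have "(w \<bullet> x)\<^sup>2 \<le> (P a \<bullet> a) * (P x \<bullet> x)"
    using posdef_op_Cauchy_Schwarz[OF P, of a x] by (simp add: Pa)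
  also have "\<dots> \<le> (w \<bullet> a) * (c * (Q x \<bullet> x))" using A0 le[of x] by (simp add: Pa mult_left_mono)
  also have "\<dots> = (c * (w \<bullet> a)) * (w \<bullet> x)" by (simp add: Qx)
  finally have "w \<bullet> x \<le> c * (w \<bullet> a)"
    using s0 by (cases "w \<bullet> x = 0") (auto simp: power2_eq_square \<open>c \<ge> 0\<close> A0)
  then show ?thesis by (simp add: x_def a_def inner_commute)
qed

definition max_rayleigh :: "('v::euclidean_space \<Rightarrow> 'v) \<Rightarrow> ('v \<Rightarrow> 'v) \<Rightarrow> ereal" where
  "max_rayleigh P Q = (SUP v\<in>-{0}. ereal (P v \<bullet> v / (Q v \<bullet> v)))"

lemma max_rayleigh_le_iff:
  assumes "posdef_op Q"
  shows "max_rayleigh P Q \<le> ereal c \<longleftrightarrow> (\<forall>v. P v \<bullet> v \<le> c * (Q v \<bullet> v))"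
proof -
  have "ereal (P v \<bullet> v / (Q v \<bullet> v)) \<le> ereal c \<longleftrightarrow> P v \<bullet> v \<le> c * (Q v \<bullet> v)" if "v \<noteq> 0" for v
  proof -
    have "Q v \<bullet> v > 0" using assms that unfolding posdef_op_def by blast
    then show ?thesis by (simp add: pos_divide_le_eq)
  qed
  then have "(\<forall>v\<in>-{0}. ereal (P v \<bullet> v / (Q v \<bullet> v)) \<le> ereal c)
      \<longleftrightarrow> (\<forall>v. v \<noteq> 0 \<longrightarrow> P v \<bullet> v \<le> c * (Q v \<bullet> v))" by auto
  also have "\<dots> \<longleftrightarrow> (\<forall>v. P v \<bullet> v \<le> c * (Q v \<bullet> v))"
    by (metis inner_zero_right mult_zero_right order_refl)
  finally show ?thesis unfolding max_rayleigh_def SUP_le_iff .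
qed

lemma max_rayleigh_inv_le:
  fixes P Q :: "'v::euclidean_space \<Rightarrow> 'v"
  assumes P: "posdef_op P" and Q: "posdef_op Q"
  shows "max_rayleigh (inv Q) (inv P) \<le> max_rayleigh P Q"
proof (rule ereal_le_real)
  fix c assume "max_rayleigh P Q \<le> ereal c"
  then have le: "\<And>v. P v \<bullet> v \<le> c * (Q v \<bullet> v)" using max_rayleigh_le_iff[OF Q] by blast
  obtain b :: 'v where "b \<in> Basis" using nonempty_Basis by blast
  then have "b \<noteq> 0" by auto
  then have "P b \<bullet> b > 0" and Qb: "Q b \<bullet> b > 0" using P Q by (auto simp: posdef_op_def)
  then have "0 < c * (Q b \<bullet> b)" using le[of b] by linarith
  then have "c \<ge> 0" using Qb by (simp add: zero_less_mult_iff)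
  then have "\<forall>w. inv Q w \<bullet> w \<le> c * (inv P w \<bullet> w)" using posdef_op_inv_antimono[OF P Q _ le] by blast
  then show "max_rayleigh (inv Q) (inv P) \<le> ereal c"
    using max_rayleigh_le_iff[OF posdef_op_inv[OF P]] by blast
qed

lemma max_rayleigh_inv:
  fixes P Q :: "'v::euclidean_space \<Rightarrow> 'v"
  assumes "posdef_op P" "posdef_op Q"
  shows "max_rayleigh (inv Q) (inv P) = max_rayleigh P Q"
proof (rule antisym)
  show "max_rayleigh (inv Q) (inv P) \<le> max_rayleigh P Q" by (rule max_rayleigh_inv_le[OF assms])
  have "max_rayleigh (inv (inv P)) (inv (inv Q)) \<le> max_rayleigh (inv Q) (inv P)"
    by (rule max_rayleigh_inv_le) (use assms posdef_op_inv in auto)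
  then show "max_rayleigh P Q \<le> max_rayleigh (inv Q) (inv P)"
    using assms by (simp add: inv_inv_eq bij_posdef_op)
qed

lemma max_rayleigh_unit_sphere:
  fixes P Q :: "'v::euclidean_space \<Rightarrow> 'v"
  assumes P: "linear P" and Q: "linear Q"
    and N_pos: "\<And>v. v \<noteq> 0 \<Longrightarrow> N v > 0"
    and N_hom: "\<And>c v. c > 0 \<Longrightarrow> N (c *\<^sub>R v) = c * N v"
  shows "(SUP v\<in>{v. N v = 1}. ereal (P v \<bullet> v / (Q v \<bullet> v))) = max_rayleigh P Q"
proof (rule antisym)
  have "N 0 = 0" using N_hom[of 2 0] by simp
  then have "{v. N v = 1} \<subseteq> -{0}" by auto
  then show "(SUP v\<in>{v. N v = 1}. ereal (P v \<bullet> v / (Q v \<bullet> v))) \<le> max_rayleigh P Q"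
    unfolding max_rayleigh_def by (rule SUP_subset_mono) simp
next
  show "max_rayleigh P Q \<le> (SUP v\<in>{v. N v = 1}. ereal (P v \<bullet> v / (Q v \<bullet> v)))"
    unfolding max_rayleigh_def
  proof (rule SUP_least)
    fix v :: 'v assume "v \<in> -{0}"
    then have Nv: "N v > 0" using N_pos by auto
    define w where "w = (1 / N v) *\<^sub>R v"
    have "N w = 1" using Nv N_hom by (simp add: w_def)
    moreover have "P w \<bullet> w / (Q w \<bullet> w) = P v \<bullet> v / (Q v \<bullet> v)"
      using Nv by (simp add: w_def linear_scale[OF P] linear_scale[OF Q])
    ultimately show "ereal (P v \<bullet> v / (Q v \<bullet> v)) \<le> (SUP v\<in>{v. N v = 1}. ereal (P v \<bullet> v / (Q v \<bullet> v)))"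
      by (metis (mono_tags, lifting) SUP_upper mem_Collect_eq)
  qed
qed

lemma uniform_const_eq_SUP_max_rayleigh:
  assumes F_pos: "\<And>x v. x \<in> M \<Longrightarrow> v \<noteq> 0 \<Longrightarrow> F x v > 0"
    and F_hom: "\<And>x c v. x \<in> M \<Longrightarrow> c > 0 \<Longrightarrow> F x (c *\<^sub>R v) = c * F x v"
    and T_lin: "\<And>x X. x \<in> M \<Longrightarrow> X \<noteq> 0 \<Longrightarrow> linear (T x X)"
    and T_tensor: "\<And>x X Y. x \<in> M \<Longrightarrow> X \<noteq> 0 \<Longrightarrow> fund_tensor (F x) X Y Y = T x X Y \<bullet> Y"
  shows "uniform_const M F =
    (SUP (x, X, Z)\<in>{(x, X, Z). x \<in> M \<and> F x X = 1 \<and> F x Z = 1}. max_rayleigh (T x X) (T x Z))"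
proof -
  have unit: "max_rayleigh (T x X) (T x Z) =
      (SUP Y\<in>{Y. F x Y = 1}. ereal (fund_tensor (F x) X Y Y / fund_tensor (F x) Z Y Y))"
    if "x \<in> M" "F x X = 1" "F x Z = 1" for x X Z
  proof -
    have nz: "X \<noteq> 0" "Z \<noteq> 0" using that F_hom[of x 2 0] by auto
    have "(SUP Y\<in>{Y. F x Y = 1}. ereal (T x X Y \<bullet> Y / (T x Z Y \<bullet> Y))) = max_rayleigh (T x X) (T x Z)"
      by (rule max_rayleigh_unit_sphere) (use that nz T_lin F_pos F_hom in auto)
    then show ?thesis using that nz by (simp add: T_tensor)
  qed
  let ?A = "{ereal (fund_tensor (F x) X Y Y / fund_tensor (F x) Z Y Y) | x X Y Z.
    x \<in> M \<and> F x X = 1 \<and> F x Y = 1 \<and> F x Z = 1}"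
  let ?B = "(SUP (x, X, Z)\<in>{(x, X, Z). x \<in> M \<and> F x X = 1 \<and> F x Z = 1}.
    max_rayleigh (T x X) (T x Z))"
  show ?thesis unfolding uniform_const_def
  proof (rule antisym)
    show "Sup ?A \<le> ?B"
    proof (rule Sup_least, clarify)
      fix x X Y Z assume xXYZ: "x \<in> M" "F x X = 1" "F x Y = 1" "F x Z = 1"
      have "ereal (fund_tensor (F x) X Y Y / fund_tensor (F x) Z Y Y) \<le> max_rayleigh (T x X) (T x Z)"
        unfolding unit[OF xXYZ(1,2,4)] using xXYZ(3) by (intro SUP_upper) simp
      also have "\<dots> \<le> ?B" using xXYZ by (intro SUP_upper2[where i = "(x, X, Z)"]) auto
      finally show "ereal (fund_tensor (F x) X Y Y / fund_tensor (F x) Z Y Y) \<le> ?B" .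
    qed
    show "?B \<le> Sup ?A"
    proof (rule SUP_least, clarify)
      fix x X Z assume xXZ: "x \<in> M" "F x X = 1" "F x Z = 1"
      show "max_rayleigh (T x X) (T x Z) \<le> Sup ?A"
        unfolding unit[OF xXZ] using xXZ by (intro SUP_least Sup_upper) blast
    qed
  qed
qed


section \<open>Minkowski norms\<close>

definition fund_op :: "('v::euclidean_space \<Rightarrow> real) \<Rightarrow> 'v \<Rightarrow> 'v \<Rightarrow> 'v" where
  "fund_op F y v = (\<Sum>b\<in>Basis. fund_tensor F y b v *\<^sub>R b)"

locale minkowski =
  fixes F :: "'v::euclidean_space \<Rightarrow> real"
  assumes minkowski_norm: "minkowski_norm F"
begin

definition dF :: "'v \<Rightarrow> 'v \<Rightarrow> real" where
  "dF z = frechet_derivative F (at z)"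

definition d2F :: "'v \<Rightarrow> 'v \<Rightarrow> 'v \<Rightarrow> real" where
  "d2F z u v = frechet_derivative (\<lambda>w. dF w u) (at z) v"

lemma F_nonneg: "F y \<ge> 0"
  using minkowski_norm by (simp add: minkowski_norm_def)

lemma continuous_on_F: "continuous_on UNIV F"
  using minkowski_norm by (simp add: minkowski_norm_def)

lemma F_scaleR: "c > 0 \<Longrightarrow> F (c *\<^sub>R y) = c * F y"
  using minkowski_norm by (simp add: minkowski_norm_def)

lemma fund_tensor_pos: "y \<noteq> 0 \<Longrightarrow> u \<noteq> 0 \<Longrightarrow> fund_tensor F y u u > 0"
  using minkowski_norm by (simp add: minkowski_norm_def)

lemma F_0 [simp]: "F 0 = 0"
  using F_scaleR[of 2 0] by simp

lemma open_punctured: "open (- {0 :: 'v})"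
  by (simp add: open_Compl)

lemma differentiable_on_derivatives:
  "F differentiable_on - {0}"
  "(\<lambda>z. dF z u) differentiable_on - {0}"
  "(\<lambda>z. d2F z u v) differentiable_on - {0}"
proof -
  have "Ck_on 3 (UNIV - {0}) F"
    using minkowski_norm by (simp add: minkowski_norm_def smooth_on_def)
  then show "F differentiable_on - {0}" "(\<lambda>z. dF z u) differentiable_on - {0}"
      "(\<lambda>z. d2F z u v) differentiable_on - {0}"
    by (simp_all add: numeral_3_eq_3 dF_def d2F_def Compl_eq_Diff_UNIV)
qed

lemma has_derivative_F: "z \<noteq> 0 \<Longrightarrow> (F has_derivative dF z) (at z)"
  using differentiable_on_derivatives(1) open_punctured
  by (simp add: differentiable_on_eq_differentiable_at dF_def frechet_derivative_works)

lemma has_derivative_dF: "z \<noteq> 0 \<Longrightarrow> ((\<lambda>w. dF w u) has_derivative d2F z u) (at z)"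
  using differentiable_on_derivatives(2) open_punctured
  by (simp add: differentiable_on_eq_differentiable_at d2F_def[abs_def] frechet_derivative_works)

lemma linear_dF: "z \<noteq> 0 \<Longrightarrow> linear (dF z)"
  using has_derivative_F has_derivative_linear by blast

lemma linear_d2F: "z \<noteq> 0 \<Longrightarrow> linear (d2F z u)"
  using has_derivative_dF has_derivative_linear by blast

lemma d2F_sym: "z \<noteq> 0 \<Longrightarrow> d2F z u v = d2F z v u"
proof (rule second_derivative_symmetric[OF open_punctured, where f = F and df = dF])
  show "isCont (\<lambda>z. d2F z u v) z" if "z \<noteq> 0" for u v z
    using differentiable_on_derivatives(3) open_punctured that
    by (metis ComplI continuous_on_eq_continuous_at differentiable_imp_continuous_on singletonD)
qed (use has_derivative_F has_derivative_dF in auto)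

lemma dF_scaleR:
  assumes "y \<noteq> 0" "c > 0"
  shows "dF (c *\<^sub>R y) = dF y"
proof -
  have cy: "c *\<^sub>R y \<noteq> 0" using assms by simp
  have "((\<lambda>w. c *\<^sub>R w) has_derivative (\<lambda>w. c *\<^sub>R w)) (at y)"
    by (auto intro!: derivative_eq_intros)
  from has_derivative_compose[OF this has_derivative_F[OF cy]]
  have "((\<lambda>w. F (c *\<^sub>R w)) has_derivative (\<lambda>v. dF (c *\<^sub>R y) (c *\<^sub>R v))) (at y)" .
  moreover have "((\<lambda>w. F (c *\<^sub>R w)) has_derivative (\<lambda>v. c * dF y v)) (at y)"
    using has_derivative_F[OF assms(1)] by (auto simp: F_scaleR[OF assms(2)] intro!: derivative_eq_intros)
  ultimately have "(\<lambda>v. dF (c *\<^sub>R y) (c *\<^sub>R v)) = (\<lambda>v. c * dF y v)"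
    by (rule has_derivative_unique)
  then show ?thesis using assms by (auto simp: fun_eq_iff linear_scale[OF linear_dF[OF cy]])
qed

lemma dF_radial: "y \<noteq> 0 \<Longrightarrow> dF y y = F y"
proof -
  assume y: "y \<noteq> 0"
  have "((\<lambda>t. F (0 + t *\<^sub>R y)) has_real_derivative dF y y) (at 1)"
    by (rule has_real_derivative_along_line) (use has_derivative_F y in simp)
  moreover have "((\<lambda>t. t * F y) has_real_derivative F y) (at 1)"
    by (auto intro!: derivative_eq_intros)
  ultimately show ?thesis
    by (rule DERIV_unique_on_open[where S = "{0<..}"]) (auto simp: F_scaleR)
qed

lemma d2F_radial: "y \<noteq> 0 \<Longrightarrow> d2F y u y = 0"
proof -
  assume y: "y \<noteq> 0"
  have "((\<lambda>t. dF (0 + t *\<^sub>R y) u) has_real_derivative d2F y u y) (at 1)"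
    by (rule has_real_derivative_along_line[where f = "\<lambda>w. dF w u"]) (use has_derivative_dF y in simp)
  moreover have "((\<lambda>t. dF y u) has_real_derivative 0) (at 1)"
    by (auto intro!: derivative_eq_intros)
  ultimately show ?thesis
    by (rule DERIV_unique_on_open[where S = "{0<..}"]) (auto simp: dF_scaleR y)
qed

lemma has_derivative_F_squared:
  assumes "w \<noteq> 0"
  shows "((\<lambda>z. (F z)\<^sup>2) has_derivative (\<lambda>v. 2 * F w * dF w v)) (at w)"
proof -
  have "((\<lambda>z. F z * F z) has_derivative (\<lambda>v. F w * dF w v + dF w v * F w)) (at w)"
    by (rule has_derivative_mult[OF has_derivative_F[OF assms] has_derivative_F[OF assms]])
  then show ?thesis by (simp add: power2_eq_square algebra_simps)
qed

lemma fund_tensor_eq: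
  assumes "z \<noteq> 0"
  shows "fund_tensor F z u v = dF z u * dF z v + F z * d2F z u v"
proof -
  have first_derivative: "frechet_derivative (\<lambda>z. (F z)\<^sup>2) (at w) u = 2 * F w * dF w u"
    if "w \<in> - {0}" for w
  proof -
    have "w \<noteq> 0" using that by simp
    from frechet_derivative_at[OF has_derivative_F_squared[OF this]] show ?thesis by metis
  qed
  have "((\<lambda>w. 2 * F w) has_derivative (\<lambda>v. 2 * dF z v)) (at z)"
    by (auto intro!: derivative_eq_intros has_derivative_F assms)
  from has_derivative_mult[OF this has_derivative_dF[OF assms]]
  have "((\<lambda>w. 2 * F w * dF w u) has_derivative
      (\<lambda>v. 2 * F z * d2F z u v + 2 * dF z v * dF z u)) (at z)" .
  then have "((\<lambda>w. frechet_derivative (\<lambda>z. (F z)\<^sup>2) (at w) u) has_derivative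
      (\<lambda>v. 2 * F z * d2F z u v + 2 * dF z v * dF z u)) (at z)"
    by (rule has_derivative_transform_within_open[OF _ open_punctured]) (use assms first_derivative in auto)
  from frechet_derivative_at[OF this]
  have "hess (\<lambda>z. (F z)\<^sup>2) z u v = 2 * F z * d2F z u v + 2 * dF z v * dF z u"
    unfolding hess_def by metis
  then show ?thesis by (simp add: fund_tensor_def algebra_simps)
qed

lemma fund_tensor_sym: "z \<noteq> 0 \<Longrightarrow> fund_tensor F z u v = fund_tensor F z v u"
  by (simp add: fund_tensor_eq d2F_sym mult.commute)

lemma linear_fund_tensor: "z \<noteq> 0 \<Longrightarrow> linear (fund_tensor F z u)"
  unfolding linear_iff using linear_dF linear_d2F
  by (simp add: fund_tensor_eq linear_add linear_scale algebra_simps)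

lemma linear_fund_tensor_left:
  assumes "z \<noteq> 0"
  shows "linear (\<lambda>u. fund_tensor F z u v)"
proof -
  have "(\<lambda>u. fund_tensor F z u v) = fund_tensor F z v" using fund_tensor_sym[OF assms] by auto
  then show ?thesis using linear_fund_tensor[OF assms] by simp
qed

lemma fund_tensor_radial: "y \<noteq> 0 \<Longrightarrow> fund_tensor F y y v = F y * dF y v"
  using d2F_sym[of y y v] d2F_radial[of y v] by (simp add: fund_tensor_eq dF_radial)

lemma F_pos: "y \<noteq> 0 \<Longrightarrow> F y > 0"
  using fund_tensor_pos[of y y] fund_tensor_radial[of y y] dF_radial[of y] F_nonneg[of y]
  by (auto simp: less_le)

lemma F_eq_0_iff: "F y = 0 \<longleftrightarrow> y = 0"
  using F_pos by force

lemma fund_tensor_eq_inner: "y \<noteq> 0 \<Longrightarrow> fund_tensor F y u v = fund_op F y v \<bullet> u"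
  unfolding fund_op_def by (rule inner_sum_Basis_linear[OF linear_fund_tensor_left, symmetric])

lemma linear_fund_op: "y \<noteq> 0 \<Longrightarrow> linear (fund_op F y)"
  unfolding linear_iff fund_op_def
  by (simp add: linear_add[OF linear_fund_tensor] linear_scale[OF linear_fund_tensor]
        scaleR_add_left sum.distrib scaleR_sum_right)

lemma posdef_fund_op:
  assumes "y \<noteq> 0"
  shows "posdef_op (fund_op F y)"
  unfolding posdef_op_def
proof (intro conjI allI impI)
  show "linear (fund_op F y)" using linear_fund_op[OF assms] .
  show "fund_op F y u \<bullet> v = u \<bullet> fund_op F y v" for u v
    using fund_tensor_eq_inner[OF assms] fund_tensor_sym[OF assms] by (metis inner_commute)
  show "fund_op F y v \<bullet> v > 0" if "v \<noteq> 0" for v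
    using fund_tensor_eq_inner[OF assms] fund_tensor_pos[OF assms that] by simp
qed

section \<open>The Legendre transformation and the dual metric\<close>

lemma legendre_eq: "y \<noteq> 0 \<Longrightarrow> legendre F y = (\<Sum>b\<in>Basis. (F y * dF y b) *\<^sub>R b)"
  by (simp add: legendre_def fund_tensor_radial)

lemma inner_legendre:
  assumes "y \<noteq> 0"
  shows "legendre F y \<bullet> v = fund_tensor F y y v"
  unfolding legendre_def using inner_sum_Basis_linear[OF linear_fund_tensor[OF assms]] assms by simp

lemma inner_legendre_self: "legendre F y \<bullet> y = (F y)\<^sup>2"
proof (cases "y = 0")
  case False
  then show ?thesis by (simp add: inner_legendre fund_tensor_radial dF_radial power2_eq_square)
qed (simp add: legendre_def)

lemma legendre_eq_0_iff: "legendre F y = 0 \<longleftrightarrow> y = 0"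
proof
  assume "legendre F y = 0"
  then have "(F y)\<^sup>2 = 0" using inner_legendre_self[of y] by simp
  then show "y = 0" using F_eq_0_iff by simp
qed (simp add: legendre_def)

lemma legendre_scaleR:
  assumes "c > 0"
  shows "legendre F (c *\<^sub>R y) = c *\<^sub>R legendre F y"
proof (cases "y = 0")
  case False
  with assms show ?thesis by (simp add: legendre_eq F_scaleR dF_scaleR scaleR_sum_right mult.assoc)
qed (simp add: legendre_def)

lemma has_derivative_legendre:
  assumes "y \<noteq> 0"
  shows "(legendre F has_derivative fund_op F y) (at y)"
proof -
  have "((\<lambda>w. (F w * dF w b) *\<^sub>R b) has_derivative
      (\<lambda>v. (F y * d2F y b v + dF y v * dF y b) *\<^sub>R b)) (at y)" for b
    using has_derivative_scaleR_left[OF has_derivative_mult[OF has_derivative_F[OF assms]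
          has_derivative_dF[OF assms]], of b] .
  then have "((\<lambda>w. \<Sum>b\<in>Basis. (F w * dF w b) *\<^sub>R b) has_derivative
      (\<lambda>v. \<Sum>b\<in>Basis. (F y * d2F y b v + dF y v * dF y b) *\<^sub>R b)) (at y)"
    by (rule has_derivative_sum)
  moreover have "(\<lambda>v. \<Sum>b\<in>Basis. (F y * d2F y b v + dF y v * dF y b) *\<^sub>R b) = fund_op F y"
  proof
    fix v
    show "(\<Sum>b\<in>Basis. (F y * d2F y b v + dF y v * dF y b) *\<^sub>R b) = fund_op F y v"
      unfolding fund_op_def fund_tensor_eq[OF assms] by (rule sum.cong) (simp_all add: mult.commute)
  qed
  ultimately have derivative: "((\<lambda>w. \<Sum>b\<in>Basis. (F w * dF w b) *\<^sub>R b) has_derivative fund_op F y) (at y)"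
    by simp
  have agree: "(\<Sum>b\<in>Basis. (F w * dF w b) *\<^sub>R b) = legendre F w" if "w \<in> - {0}" for w
    using legendre_eq[of w] that by simp
  show ?thesis
    by (rule has_derivative_transform_within_open[OF derivative open_punctured _ agree]) (use assms in simp)
qed

lemma continuous_on_legendre: "continuous_on (- {0}) (legendre F)"
  by (intro continuous_at_imp_continuous_on ballI has_derivative_continuous[OF has_derivative_legendre])
    simp

text \<open>If L(y1) = L(y2) = \<xi>, then \<xi> \<bullet> y1 > 0 and \<xi> \<bullet> y2 > 0, so the segment from y1 to y2
  misses the origin; along it t \<mapsto> L(y1 + t d) \<bullet> d, d = y2 - y1, has derivative g(d,d) > 0.\<close>

lemma legendre_inj_nonzero:
  assumes y1: "y1 \<noteq> 0" and y2: "y2 \<noteq> 0" and eq: "legendre F y1 = legendre F y2"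
  shows "y1 = y2"
proof (rule ccontr)
  assume "y1 \<noteq> y2"
  define d where "d = y2 - y1"
  have d: "d \<noteq> 0" using \<open>y1 \<noteq> y2\<close> by (simp add: d_def)
  define \<xi> where "\<xi> = legendre F y1"
  have p1: "\<xi> \<bullet> y1 > 0" using inner_legendre_self[of y1] F_pos[OF y1] by (simp add: \<xi>_def)
  have p2: "\<xi> \<bullet> y2 > 0" using inner_legendre_self[of y2] F_pos[OF y2] eq by (simp add: \<xi>_def)
  show False
  proof (cases "\<exists>t\<in>{0..1}. y1 + t *\<^sub>R d = 0")
    case True
    then obtain t where t: "0 \<le> t" "t \<le> 1" "y1 + t *\<^sub>R d = 0" by auto
    have "y1 = - (t *\<^sub>R d)" "y2 = (1 - t) *\<^sub>R d"
      using t(3) by (simp_all add: d_def eq_neg_iff_add_eq_0 algebra_simps)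
    then have "t * (\<xi> \<bullet> d) < 0" "(1 - t) * (\<xi> \<bullet> d) > 0" using p1 p2 by simp_all
    then have "t * (\<xi> \<bullet> d) < 0" "\<xi> \<bullet> d > 0" using t(2) by (auto simp: zero_less_mult_iff)
    then show False using t(1) mult_nonneg_nonneg[of t "\<xi> \<bullet> d"] by linarith
  next
    case False
    define q where "q t = legendre F (y1 + t *\<^sub>R d) \<bullet> d" for t
    have "(q has_real_derivative fund_tensor F (y1 + t *\<^sub>R d) d d) (at t)" if "0 \<le> t" "t \<le> 1" for t
    proof -
      have nz: "y1 + t *\<^sub>R d \<noteq> 0" using False that by auto
      have "((\<lambda>z. legendre F z \<bullet> d) has_derivative (\<lambda>v. fund_op F (y1 + t *\<^sub>R d) v \<bullet> d))
          (at (y1 + t *\<^sub>R d))"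
        by (rule has_derivative_inner_left[OF has_derivative_legendre[OF nz]])
      from has_real_derivative_along_line[OF this] show ?thesis
        unfolding q_def using fund_tensor_eq_inner[OF nz] by simp
    qed
    from MVT2[of 0 1 q, OF _ this] obtain s where s: "0 < s" "s < 1"
      "q 1 - q 0 = fund_tensor F (y1 + s *\<^sub>R d) d d" by auto
    moreover have "q 1 = q 0" using eq by (simp add: q_def d_def)
    moreover have "fund_tensor F (y1 + s *\<^sub>R d) d d > 0"
      using fund_tensor_pos[OF _ d] False s by auto
    ultimately show False by simp
  qed
qed

lemma F_lower_bound: "\<exists>m>0. \<forall>y. m * norm y \<le> F y"
proof -
  obtain b :: 'v where "b \<in> Basis" using nonempty_Basis by blast
  then have ne: "sphere (0::'v) 1 \<noteq> {}" by (auto simp: norm_Basis)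
  obtain y0 where y0: "y0 \<in> sphere 0 1" "\<And>y. y \<in> sphere 0 1 \<Longrightarrow> F y0 \<le> F y"
    using continuous_attains_inf[OF compact_sphere ne continuous_on_subset[OF continuous_on_F]]
    by blast
  have "F y0 * norm y \<le> F y" for y
  proof (cases "y = 0")
    case False
    then have "F y0 \<le> F ((1 / norm y) *\<^sub>R y)" using y0(2) by simp
    also have "\<dots> = F y / norm y" using False by (simp add: F_scaleR)
    finally show ?thesis using False by (simp add: field_simps)
  qed simp
  moreover have "F y0 > 0" using y0(1) by (intro F_pos) auto
  ultimately show ?thesis by blast
qed

text \<open>\<xi> = L(y) at a minimum point y of the coercive function F(y)^2 - 2 \<xi> \<bullet> y; and y \<noteq> 0
  because this function is negative somewhere on the ray through \<xi>.\<close>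

lemma legendre_surj: "\<exists>y. legendre F y = \<xi>"
proof (cases "\<xi> = 0")
  case True then show ?thesis by (auto simp: legendre_def)
next
  case False
  obtain m where m: "m > 0" "\<And>y. m * norm y \<le> F y" using F_lower_bound by blast
  define \<phi> where "\<phi> y = (F y)\<^sup>2 - (2 *\<^sub>R \<xi>) \<bullet> y" for y
  define R where "R = 2 * norm \<xi> / m\<^sup>2"
  have R: "R \<ge> 0" using m(1) by (simp add: R_def)
  have "continuous_on (cball 0 R) \<phi>"
    unfolding \<phi>_def by (intro continuous_intros continuous_on_subset[OF continuous_on_F]) auto
  then obtain y0 where y0: "y0 \<in> cball 0 R" "\<And>y. y \<in> cball 0 R \<Longrightarrow> \<phi> y0 \<le> \<phi> y"
    using continuous_attains_inf[OF compact_cball] R by (metis cball_eq_empty not_less)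
  have outside: "\<phi> y > 0" if "norm y > R" for y
  proof -
    have "2 * norm \<xi> < m\<^sup>2 * norm y" using that m(1) by (simp add: R_def field_simps)
    then have "2 * norm \<xi> * norm y < m\<^sup>2 * norm y * norm y"
      using that R by (intro mult_strict_right_mono) auto
    also have "\<dots> \<le> (F y)\<^sup>2" using m(2)[of y] m(1) power_mono[of "m * norm y" "F y" 2]
      by (simp add: power2_eq_square algebra_simps)
    finally show ?thesis using norm_cauchy_schwarz[of \<xi> y] by (simp add: \<phi>_def)
  qed
  have min: "\<phi> y0 \<le> \<phi> y" for y
  proof (cases "y \<in> cball 0 R")
    case False
    have "\<phi> y0 \<le> \<phi> 0" using y0(2)[of 0] R by simp
    also have "\<dots> < \<phi> y" using outside[of y] False by (simp add: \<phi>_def)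
    finally show ?thesis by simp
  qed (use y0 in blast)
  have y0_nz: "y0 \<noteq> 0"
  proof
    assume "y0 = 0"
    define t where "t = (norm \<xi>)\<^sup>2 / (F \<xi>)\<^sup>2"
    have t: "t > 0" using False F_pos[OF False] by (simp add: t_def)
    have "norm \<xi> * norm \<xi> = \<xi> \<bullet> \<xi>" by (metis power2_norm_eq_inner power2_eq_square)
    then have "\<phi> (t *\<^sub>R \<xi>) = t * (t * (F \<xi>)\<^sup>2) - 2 * t * (norm \<xi>)\<^sup>2"
      using t by (simp add: \<phi>_def F_scaleR power2_eq_square algebra_simps)
    also have "\<dots> = - t * (norm \<xi>)\<^sup>2" using F_pos[OF False] by (simp add: t_def)
    also have "\<dots> < 0" using t False by simp
    finally show False using min[of "t *\<^sub>R \<xi>"] \<open>y0 = 0\<close> by (simp add: \<phi>_def)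
  qed
  have derivative: "(\<phi> has_derivative (\<lambda>v. 2 * F y0 * dF y0 v - (2 *\<^sub>R \<xi>) \<bullet> v)) (at y0)"
    unfolding \<phi>_def[abs_def]
    by (intro has_derivative_diff has_derivative_F_squared[OF y0_nz] has_derivative_inner_right
        has_derivative_ident)
  have "(\<lambda>v. 2 * F y0 * dF y0 v - (2 *\<^sub>R \<xi>) \<bullet> v) = (\<lambda>v. 0)"
    by (rule differential_zero_maxmin[of y0 UNIV]) (use derivative min in auto)
  then have "2 * F y0 * dF y0 v - (2 *\<^sub>R \<xi>) \<bullet> v = 0" for v
    using fun_cong[where x = v] by fastforce
  then have "(legendre F y0 - \<xi>) \<bullet> v = 0" for v
    by (simp add: inner_legendre[OF y0_nz] fund_tensor_radial[OF y0_nz] inner_diff_left)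
  then show ?thesis by (metis inner_eq_zero_iff eq_iff_diff_eq_0)
qed

lemma bij_legendre: "bij (legendre F)"
proof (rule bijI)
  show "inj (legendre F)"
  proof (rule injI)
    fix y1 y2 assume "legendre F y1 = legendre F y2"
    then show "y1 = y2" by (metis legendre_eq_0_iff legendre_inj_nonzero)
  qed
  show "surj (legendre F)" using legendre_surj by (metis surjI)
qed

lemma legendre_inv_legendre [simp]: "inv (legendre F) (legendre F y) = y"
  using bij_legendre by (simp add: bij_def inv_f_f)

lemma legendre_legendre_inv [simp]: "legendre F (inv (legendre F) \<xi>) = \<xi>"
  using bij_legendre by (simp add: bij_def surj_f_inv_f)

lemma legendre_inv_eq_0_iff: "inv (legendre F) \<xi> = 0 \<longleftrightarrow> \<xi> = 0"
  by (metis legendre_legendre_inv legendre_eq_0_iff)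

lemma dual_metric_legendre [simp]: "dual_metric F (legendre F y) = F y"
  by (simp add: dual_metric_def)

lemma dual_metric_scaleR:
  assumes "c > 0"
  shows "dual_metric F (c *\<^sub>R \<xi>) = c * dual_metric F \<xi>"
proof -
  have "c *\<^sub>R \<xi> = legendre F (c *\<^sub>R inv (legendre F) \<xi>)" by (simp add: legendre_scaleR[OF assms])
  then show ?thesis by (simp add: dual_metric_def F_scaleR[OF assms])
qed

lemma dual_metric_pos: "\<xi> \<noteq> 0 \<Longrightarrow> dual_metric F \<xi> > 0"
  by (simp add: dual_metric_def F_pos legendre_inv_eq_0_iff)

lemma has_derivative_legendre_inv:
  assumes "\<xi> \<noteq> 0"
  shows "(inv (legendre F) has_derivative inv (fund_op F (inv (legendre F) \<xi>))) (at \<xi>)"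
proof -
  let ?y = "inv (legendre F) \<xi>"
  have y: "?y \<noteq> 0" using assms legendre_inv_eq_0_iff by simp
  have "fund_op F ?y \<circ> inv (fund_op F ?y) = id"
    using bij_posdef_op[OF posdef_fund_op[OF y]] by (simp add: bij_def surj_iff)
  from has_derivative_inverse_strong[OF open_punctured _ continuous_on_legendre _
      has_derivative_legendre[OF y] this, of "inv (legendre F)"] y
  show ?thesis by simp
qed

text \<open>(F*)^2(\<xi>) = \<xi> \<bullet> L^-1(\<xi>), whose derivative is 2 u \<bullet> L^-1(\<xi>) since
  \<xi> \<bullet> G(y)^-1 u = g_y(y, G(y)^-1 u) = u \<bullet> y for y = L^-1(\<xi>).\<close>

lemma dual_metric_squared: "(dual_metric F \<xi>)\<^sup>2 = \<xi> \<bullet> inv (legendre F) \<xi>"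
  using inner_legendre_self[of "inv (legendre F) \<xi>"] by (simp add: dual_metric_def)

lemma has_derivative_dual_metric_squared:
  assumes "\<zeta> \<noteq> 0"
  shows "((\<lambda>\<xi>. \<xi> \<bullet> inv (legendre F) \<xi>) has_derivative (\<lambda>u. 2 * (u \<bullet> inv (legendre F) \<zeta>))) (at \<zeta>)"
proof -
  define y where "y = inv (legendre F) \<zeta>"
  have y: "y \<noteq> 0" using assms legendre_inv_eq_0_iff by (simp add: y_def)
  have "\<zeta> \<bullet> inv (fund_op F y) u = u \<bullet> y" for u
  proof -
    define w where "w = inv (fund_op F y) u"
    have "fund_op F y w = u"
      using bij_posdef_op[OF posdef_fund_op[OF y]] by (simp add: w_def bij_def surj_f_inv_f)
    moreover have "\<zeta> = legendre F y" by (simp add: y_def)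
    ultimately show ?thesis
      using inner_legendre[OF y, of w] fund_tensor_eq_inner[OF y, of y w] fund_tensor_sym[OF y]
      by (simp add: w_def)
  qed
  then show ?thesis
    using has_derivative_inner[OF has_derivative_ident has_derivative_legendre_inv[OF assms]]
    by (simp add: y_def)
qed

lemma fund_tensor_dual_metric:
  assumes "\<xi> \<noteq> 0"
  shows "fund_tensor (dual_metric F) \<xi> u v = inv (fund_op F (inv (legendre F) \<xi>)) v \<bullet> u"
proof -
  have first_derivative:
    "frechet_derivative (\<lambda>\<xi>. \<xi> \<bullet> inv (legendre F) \<xi>) (at \<zeta>) u = 2 * (u \<bullet> inv (legendre F) \<zeta>)"
    if "\<zeta> \<in> - {0}" for \<zeta>
  proof -
    have "\<zeta> \<noteq> 0" using that by simp
    from frechet_derivative_at[OF has_derivative_dual_metric_squared[OF this]] show ?thesis by metis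
  qed
  have "((\<lambda>\<zeta>. 2 * (u \<bullet> inv (legendre F) \<zeta>)) has_derivative
      (\<lambda>v. 2 * (u \<bullet> inv (fund_op F (inv (legendre F) \<xi>)) v))) (at \<xi>)"
    by (intro has_derivative_mult_right has_derivative_inner_right has_derivative_legendre_inv[OF assms])
  then have "((\<lambda>\<zeta>. frechet_derivative (\<lambda>\<xi>. \<xi> \<bullet> inv (legendre F) \<xi>) (at \<zeta>) u) has_derivative
      (\<lambda>v. 2 * (u \<bullet> inv (fund_op F (inv (legendre F) \<xi>)) v))) (at \<xi>)"
    by (rule has_derivative_transform_within_open[OF _ open_punctured])
      (use assms first_derivative in auto)
  from frechet_derivative_at[OF this]
  have "hess (\<lambda>\<xi>. \<xi> \<bullet> inv (legendre F) \<xi>) \<xi> u v = 2 * (u \<bullet> inv (fund_op F (inv (legendre F) \<xi>)) v)"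
    unfolding hess_def by metis
  then show ?thesis
    by (simp add: fund_tensor_def dual_metric_squared inner_commute)
qed

lemma dual_metric_eq_0_iff: "dual_metric F \<xi> = 0 \<longleftrightarrow> \<xi> = 0"
  by (simp add: dual_metric_def F_eq_0_iff legendre_inv_eq_0_iff)

lemma linear_inv_fund_op:
  assumes "\<xi> \<noteq> 0"
  shows "linear (inv (fund_op F (inv (legendre F) \<xi>)))"
  using assms posdef_op_inv[OF posdef_fund_op, of "inv (legendre F) \<xi>"]
  by (simp add: posdef_op_def legendre_inv_eq_0_iff)

lemma max_rayleigh_dual:
  assumes "\<xi> \<noteq> 0" "\<zeta> \<noteq> 0"
  shows "max_rayleigh (inv (fund_op F (inv (legendre F) \<xi>))) (inv (fund_op F (inv (legendre F) \<zeta>)))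
    = max_rayleigh (fund_op F (inv (legendre F) \<zeta>)) (fund_op F (inv (legendre F) \<xi>))"
  using assms by (intro max_rayleigh_inv posdef_fund_op) (simp_all add: legendre_inv_eq_0_iff)

end

lemma SUP_max_rayleigh_dual:
  assumes mk: "\<And>x. x \<in> M \<Longrightarrow> minkowski (F x)"
  shows "(SUP (x, \<xi>, \<zeta>)\<in>{(x, \<xi>, \<zeta>). x \<in> M \<and> dual_metric (F x) \<xi> = 1 \<and> dual_metric (F x) \<zeta> = 1}.
      max_rayleigh (inv (fund_op (F x) (inv (legendre (F x)) \<xi>)))
        (inv (fund_op (F x) (inv (legendre (F x)) \<zeta>))))
    = (SUP (x, X, Z)\<in>{(x, X, Z). x \<in> M \<and> F x X = 1 \<and> F x Z = 1}.
      max_rayleigh (fund_op (F x) X) (fund_op (F x) Z))"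
proof (rule SUP_eq, goal_cases)
  case (1 i)
  then obtain x \<xi> \<zeta> where i: "i = (x, \<xi>, \<zeta>)" and x: "x \<in> M"
    and unit: "dual_metric (F x) \<xi> = 1" "dual_metric (F x) \<zeta> = 1" by blast
  interpret minkowski "F x" by (rule mk[OF x])
  have "\<xi> \<noteq> 0" "\<zeta> \<noteq> 0" using unit dual_metric_eq_0_iff zero_neq_one by metis+
  then have "max_rayleigh (inv (fund_op (F x) (inv (legendre (F x)) \<xi>)))
      (inv (fund_op (F x) (inv (legendre (F x)) \<zeta>)))
    = max_rayleigh (fund_op (F x) (inv (legendre (F x)) \<zeta>)) (fund_op (F x) (inv (legendre (F x)) \<xi>))"
    by (rule max_rayleigh_dual)
  moreover have "(x, inv (legendre (F x)) \<zeta>, inv (legendre (F x)) \<xi>)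
      \<in> {(x, X, Z). x \<in> M \<and> F x X = 1 \<and> F x Z = 1}"
    using x unit by (simp add: dual_metric_def)
  ultimately show ?case
    unfolding i by (intro bexI[where x = "(x, inv (legendre (F x)) \<zeta>, inv (legendre (F x)) \<xi>)"]) simp_all
next
  case (2 j)
  then obtain x X Z where j: "j = (x, X, Z)" and x: "x \<in> M"
    and unit: "F x X = 1" "F x Z = 1" by blast
  interpret minkowski "F x" by (rule mk[OF x])
  have "legendre (F x) Z \<noteq> 0" "legendre (F x) X \<noteq> 0"
    using unit F_eq_0_iff legendre_eq_0_iff zero_neq_one by metis+
  from max_rayleigh_dual[OF this]
  have "max_rayleigh (inv (fund_op (F x) Z)) (inv (fund_op (F x) X))
    = max_rayleigh (fund_op (F x) X) (fund_op (F x) Z)" by simp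
  moreover have "(x, legendre (F x) Z, legendre (F x) X)
      \<in> {(x, \<xi>, \<zeta>). x \<in> M \<and> dual_metric (F x) \<xi> = 1 \<and> dual_metric (F x) \<zeta> = 1}"
    using x unit by simp
  ultimately show ?case
    unfolding j by (intro bexI[where x = "(x, legendre (F x) Z, legendre (F x) X)"]) simp_all
qed

theorem proposition8p2:
  fixes M :: "'m set" and F :: "'m \<Rightarrow> 'v::euclidean_space \<Rightarrow> real"
  assumes "\<forall>x\<in>M. minkowski_norm (F x)"
    and "uniform_const M F < \<infinity>"
  shows "uniform_const M (\<lambda>x. dual_metric (F x)) = uniform_const M F"
proof -
  have mk: "minkowski (F x)" if "x \<in> M" for x
    using assms(1) that by (simp add: minkowski_def)
  have "uniform_const M (\<lambda>x. dual_metric (F x))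
    = (SUP (x, \<xi>, \<zeta>)\<in>{(x, \<xi>, \<zeta>). x \<in> M \<and> dual_metric (F x) \<xi> = 1 \<and> dual_metric (F x) \<zeta> = 1}.
        max_rayleigh (inv (fund_op (F x) (inv (legendre (F x)) \<xi>)))
          (inv (fund_op (F x) (inv (legendre (F x)) \<zeta>))))"
    using minkowski.dual_metric_pos[OF mk] minkowski.dual_metric_scaleR[OF mk]
      minkowski.linear_inv_fund_op[OF mk] minkowski.fund_tensor_dual_metric[OF mk]
    by (rule uniform_const_eq_SUP_max_rayleigh)
  also have "\<dots> = (SUP (x, X, Z)\<in>{(x, X, Z). x \<in> M \<and> F x X = 1 \<and> F x Z = 1}.
      max_rayleigh (fund_op (F x) X) (fund_op (F x) Z))"
    using mk by (rule SUP_max_rayleigh_dual)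
  also have "\<dots> = uniform_const M F"
    using minkowski.F_pos[OF mk] minkowski.F_scaleR[OF mk] minkowski.linear_fund_op[OF mk]
      minkowski.fund_tensor_eq_inner[OF mk]
    by (rule uniform_const_eq_SUP_max_rayleigh[symmetric])
  finally show ?thesis .
qed

end
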